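(* Let $M,N$ be positive integers and $P_s>0$. Let $\{x[k,l] : 0\le k\le N-1,\ 0\le l\le M-1\}$ be independent and identically distributed QPSK symbols of power $P_s$, i.e. each $x[k,l]$ is uniformly distributed on $\{\sqrt{P_s/2}\,(\pm 1 \pm \mathrm{i})\}$ (so $|x[k,l]|^2=P_s$). Define the matrix $\widetilde{\mathbf{X}}\in\mathbb{C}^{MN\times MN}$ as follows: for row index $p=k'+Nl'$ and column index $q=k''+Nl''$ with $0\le k',k''\le N-1$ and $0\le l',l''\le M-1$, $$ \widetilde{\mathbf{X}}[p,q]=\begin{cases} x\big[[k'-k'']_N,[l'-l'']_M\big]\, e^{-\mathrm{i}2\pi\frac{k'}{N}}\, e^{\mathrm{i}2\pi\frac{(k'')_N\,[l'-l'']_M}{MN}} & \text{if } l'<l'',\\[4pt] x\big[[k'-k'']_N,[l'-l'']_M\big]\, e^{\mathrm{i}2\pi\frac{(k'')_N\,[l'-l'']_M}{MN}} & \text{otherwise,} \end{cases} $$ and let $\mathbf{G}=\widetilde{\mathbf{X}}^{\mathrm H}\widetilde{\mathbf{X}}\in\mathbb{C}^{MN\times MN}$. Then for every off-diagonal entry, i.e. every $0\le p\ne q\le MN-1$, $$ \mathbb{E}\big[\mathbf{G}[p,q]\big]=0,\qquad \operatorname{var}\big[\mathbf{G}[p,q]\big]=MNP_s^2 . $$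
   Context: $\mathrm{i}$ denotes the imaginary unit and $\widetilde{\mathbf{X}}^{\mathrm H}$ the conjugate transpose. $[a]_N$ and $[a]_M$ denote the residues of the integer $a$ modulo $N$ and modulo $M$ (in $\{0,\dots,N-1\}$ and $\{0,\dots,M-1\}$ respectively). For an integer $0\le k\le N-1$, $(k)_N=k$ if $k\le N/2$ and $(k)_N=k-N$ otherwise. (In the paper, $\widetilde{\mathbf{X}}$ arises from writing the OTFS delay–Doppler input–output relation $\mathbf{y}=\widetilde{\mathbf{X}}\mathbf{h}+\mathbf{w}$, and $\mathbf{G}$ is the gain matrix of the matched filter estimate $\widetilde{\mathbf{X}}^{\mathrm H}\mathbf{y}$.) *)

theory Defs
  imports "HOL-Probability.Probability"
begin

definition qpsk :: "real \<Rightarrow> complex set" where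
  "qpsk Ps = {complex_of_real (sqrt (Ps / 2)) * (complex_of_real a + \<i> * complex_of_real b)
              | a b. a \<in> {1, -1} \<and> b \<in> {1, -1}}"

definition symbol_assignments :: "nat \<Rightarrow> nat \<Rightarrow> real \<Rightarrow> (nat \<times> nat \<Rightarrow> complex) set" where
  "symbol_assignments N M Ps =
     {x. (\<forall>k l. k < N \<and> l < M \<longrightarrow> x (k, l) \<in> qpsk Ps) \<and>
         (\<forall>k l. \<not> (k < N \<and> l < M) \<longrightarrow> x (k, l) = 0)}"

text \<open>i.i.d. uniform QPSK symbols = uniform distribution over all assignments.\<close>
definition qpsk_symbols :: "nat \<Rightarrow> nat \<Rightarrow> real \<Rightarrow> (nat \<times> nat \<Rightarrow> complex) pmf" where
  "qpsk_symbols N M Ps = pmf_of_set (symbol_assignments N M Ps)"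

definition centered :: "nat \<Rightarrow> nat \<Rightarrow> int" where
  "centered N k = (if 2 * k \<le> N then int k else int k - int N)"

definition Xt :: "nat \<Rightarrow> nat \<Rightarrow> (nat \<times> nat \<Rightarrow> complex) \<Rightarrow> nat \<Rightarrow> nat \<Rightarrow> complex" where
  "Xt N M x p q =
    (let k1 = p mod N; l1 = p div N; k2 = q mod N; l2 = q div N;
         a = nat ((int k1 - int k2) mod int N);
         b = nat ((int l1 - int l2) mod int M);
         ph = cis (2 * pi * real_of_int (centered N k2) * real b / (real M * real N))
     in if l1 < l2 then x (a, b) * cis (- 2 * pi * real k1 / real N) * ph
        else x (a, b) * ph)"

definition Gmat :: "nat \<Rightarrow> nat \<Rightarrow> (nat \<times> nat \<Rightarrow> complex) \<Rightarrow> nat \<Rightarrow> nat \<Rightarrow> complex" where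
  "Gmat N M x p q = (\<Sum>r < M * N. cnj (Xt N M x r p) * Xt N M x r q)"

definition cvariance :: "'a pmf \<Rightarrow> ('a \<Rightarrow> complex) \<Rightarrow> real" where
  "cvariance D Z = measure_pmf.expectation D
      (\<lambda>w. (cmod (Z w - measure_pmf.expectation D Z))\<^sup>2)"

end

theory Submission
  imports Defs
begin

text \<open>Writing \<open>X\<^sub>t[r, q] = x(\<alpha>\<^sub>r\<^sub>q) \<phi>\<^sub>r\<^sub>q\<close> (\<open>\<alpha>\<^sub>r\<^sub>q = symbol_index N M r q\<close>,
  \<open>\<phi>\<^sub>r\<^sub>q = Xt_phase N M r q\<close> unimodular), the entry
  \<open>G[p, q] = \<Sum>\<^sub>r \<phi>\<^sub>r\<^sub>p\<^sup>* \<phi>\<^sub>r\<^sub>q x(\<alpha>\<^sub>r\<^sub>p)\<^sup>* x(\<alpha>\<^sub>r\<^sub>q)\<close> is a sum of \<open>MN\<close> products of two distinct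
  symbols (\<open>\<alpha>\<^sub>r\<^sub>p \<noteq> \<alpha>\<^sub>r\<^sub>q\<close> for \<open>p \<noteq> q\<close>). The uniform distribution of the symbols is invariant
  under multiplying a single symbol by \<open>\<i>\<close>; this symmetry kills every mixed moment in which
  that symbol does not occur together with its conjugate. Hence \<open>E G[p, q] = 0\<close>, and in
  \<open>E |G[p, q]|\<^sup>2\<close> only the \<open>MN\<close> diagonal terms survive, each equal to \<open>|x|\<^sup>4 = P\<^sub>s\<^sup>2\<close>,
  because \<open>r \<mapsto> \<alpha>\<^sub>r\<^sub>q\<close> is injective.\<close>

lemma sum_eq_0_if_equivariant:
  fixes f :: "'a \<Rightarrow> 'b::field"
  assumes "bij_betw g S S" and "\<And>x. x \<in> S \<Longrightarrow> f (g x) = c * f x" and "c \<noteq> 1"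
  shows "sum f S = 0"
proof -
  have "sum f S = sum (f \<circ> g) S"
    by (simp add: sum.reindex_bij_betw[OF assms(1)])
  also have "\<dots> = c * sum f S"
    by (simp add: assms(2) sum_distrib_left)
  finally have "(1 - c) * sum f S = 0"
    by (simp add: algebra_simps)
  with assms(3) show ?thesis
    by simp
qed

lemma integral_pmf_of_set_vector:
  fixes f :: "'a \<Rightarrow> 'b::{banach, second_countable_topology}"
  assumes "S \<noteq> {}" and "finite S"
  shows "measure_pmf.expectation (pmf_of_set S) f = (1 / real (card S)) *\<^sub>R sum f S"
  using assms by (subst integral_measure_pmf[OF assms(2)]) (auto simp: scaleR_sum_right)

definition rotate_at :: "'a \<Rightarrow> ('a \<Rightarrow> complex) \<Rightarrow> 'a \<Rightarrow> complex" where
  "rotate_at u x = x(u := \<i> * x u)"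

definition rotation_closed :: "('a \<Rightarrow> complex) set \<Rightarrow> bool" where
  "rotation_closed S \<longleftrightarrow> (\<forall>u. \<forall>x\<in>S. rotate_at u x \<in> S)"

lemma bij_betw_rotate_at:
  assumes "rotation_closed S"
  shows "bij_betw (rotate_at u) S S"
proof (rule bij_betwI[where g = "rotate_at u \<circ> rotate_at u \<circ> rotate_at u"])
  show "rotate_at u \<in> S \<rightarrow> S" and "rotate_at u \<circ> rotate_at u \<circ> rotate_at u \<in> S \<rightarrow> S"
    using assms by (auto simp: rotation_closed_def)
qed (auto simp: rotate_at_def fun_eq_iff)

lemma sum_cnj_mult_eq_0:
  assumes "rotation_closed S" and "a \<noteq> b"
  shows "(\<Sum>x\<in>S. cnj (x a) * x b) = 0"
  by (rule sum_eq_0_if_equivariant[OF bij_betw_rotate_at[OF assms(1), of b], where c = \<i>])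
     (use assms(2) in \<open>auto simp: rotate_at_def\<close>)

lemma sum_fourth_moment_eq_0:
  assumes "rotation_closed S" and "a \<noteq> b" and "b' \<noteq> b"
  shows "(\<Sum>x\<in>S. cnj (x a) * x b * (x a' * cnj (x b'))) = 0"
proof (rule sum_eq_0_if_equivariant[OF bij_betw_rotate_at[OF assms(1), of b],
      where c = "if a' = b then -1 else \<i>"])
  fix x :: "'a \<Rightarrow> complex"
  show "cnj (rotate_at b x a) * rotate_at b x b * (rotate_at b x a' * cnj (rotate_at b x b'))
      = (if a' = b then -1 else \<i>) * (cnj (x a) * x b * (x a' * cnj (x b')))"
    using assms(2,3) by (auto simp: rotate_at_def algebra_simps)
qed (auto simp: complex_eq_iff)

lemma sum_sesquilinear_eq_0:
  assumes "rotation_closed S" and "\<And>r. r \<in> R \<Longrightarrow> a r \<noteq> b r"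
  shows "(\<Sum>x\<in>S. \<Sum>r\<in>R. A r * (cnj (x (a r)) * x (b r))) = 0"
proof -
  have "(\<Sum>x\<in>S. \<Sum>r\<in>R. A r * (cnj (x (a r)) * x (b r)))
      = (\<Sum>r\<in>R. A r * (\<Sum>x\<in>S. cnj (x (a r)) * x (b r)))"
    by (subst sum.swap) (simp add: sum_distrib_left)
  also have "\<dots> = 0"
    using sum_cnj_mult_eq_0[OF assms(1)] assms(2) by simp
  finally show ?thesis .
qed

lemma sum_cmod_sesquilinear_squared:
  fixes P :: real
  assumes "rotation_closed S" and "finite R"
    and "\<And>r. r \<in> R \<Longrightarrow> a r \<noteq> b r" and "inj_on b R"
    and "\<And>r. r \<in> R \<Longrightarrow> cmod (A r) = 1"
    and "\<And>x r. x \<in> S \<Longrightarrow> r \<in> R \<Longrightarrow> (cmod (x (a r)))\<^sup>2 = P \<and> (cmod (x (b r)))\<^sup>2 = P"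
  shows "(\<Sum>x\<in>S. (cmod (\<Sum>r\<in>R. A r * (cnj (x (a r)) * x (b r))))\<^sup>2)
       = real (card S) * real (card R) * P\<^sup>2"
proof -
  define m where "m r s = (\<Sum>x\<in>S. cnj (x (a r)) * x (b r) * (x (a s) * cnj (x (b s))))" for r s
  have m_diag: "m r r = of_nat (card S) * complex_of_real (P\<^sup>2)" if "r \<in> R" for r
  proof -
    have "cnj (x (a r)) * x (b r) * (x (a r) * cnj (x (b r))) = complex_of_real (P\<^sup>2)"
      if "x \<in> S" for x
    proof -
      have "cnj (x (a r)) * x (b r) * (x (a r) * cnj (x (b r)))
          = complex_of_real ((cmod (x (a r)))\<^sup>2) * complex_of_real ((cmod (x (b r)))\<^sup>2)"
        by (simp only: complex_norm_square ac_simps)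
      also have "\<dots> = complex_of_real (P\<^sup>2)"
        using assms(6)[OF \<open>x \<in> S\<close> \<open>r \<in> R\<close>] by (simp add: power2_eq_square flip: of_real_mult)
      finally show ?thesis .
    qed
    then show ?thesis
      by (simp add: m_def)
  qed
  have m_offdiag: "m r s = 0" if "r \<in> R" "s \<in> R" "r \<noteq> s" for r s
  proof -
    have "b s \<noteq> b r"
      using assms(4) that by (auto simp: inj_on_def)
    then show ?thesis
      unfolding m_def by (rule sum_fourth_moment_eq_0[OF assms(1) assms(3)[OF \<open>r \<in> R\<close>]])
  qed
  have "complex_of_real (\<Sum>x\<in>S. (cmod (\<Sum>r\<in>R. A r * (cnj (x (a r)) * x (b r))))\<^sup>2)
      = (\<Sum>x\<in>S. (\<Sum>r\<in>R. A r * (cnj (x (a r)) * x (b r)))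
                 * (\<Sum>s\<in>R. cnj (A s) * (x (a s) * cnj (x (b s)))))"
    by (simp only: of_real_sum complex_norm_square cnj_sum complex_cnj_mult complex_cnj_cnj)
  also have "\<dots> = (\<Sum>x\<in>S. \<Sum>r\<in>R. \<Sum>s\<in>R. A r * cnj (A s)
           * (cnj (x (a r)) * x (b r) * (x (a s) * cnj (x (b s)))))"
    by (simp add: sum_product mult_ac)
  also have "\<dots> = (\<Sum>r\<in>R. \<Sum>s\<in>R. A r * cnj (A s) * m r s)"
    unfolding m_def by (subst sum.swap, simp add: sum.swap[of _ S] sum_distrib_left)
  also have "\<dots> = (\<Sum>r\<in>R. \<Sum>s\<in>R. if s = r then A r * cnj (A r) * m r r else 0)"
    using m_offdiag by (intro sum.cong refl) auto
  also have "\<dots> = (\<Sum>r\<in>R. A r * cnj (A r) * m r r)"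
    using assms(2) by simp
  also have "\<dots> = (\<Sum>r\<in>R. of_nat (card S) * complex_of_real (P\<^sup>2))"
    using assms(5) m_diag by (simp add: complex_norm_square[symmetric])
  also have "\<dots> = complex_of_real (real (card S) * real (card R) * P\<^sup>2)"
    by simp
  finally show ?thesis
    by (simp only: of_real_eq_iff)
qed

lemma mult_i_qpsk: "z \<in> qpsk Ps \<Longrightarrow> \<i> * z \<in> qpsk Ps"
proof -
  assume "z \<in> qpsk Ps"
  then obtain a b where z: "z = complex_of_real (sqrt (Ps / 2)) * (of_real a + \<i> * of_real b)"
    and ab: "a \<in> {1, -1}" "b \<in> {1, -1}"
    unfolding qpsk_def by blast
  have "\<i> * z = complex_of_real (sqrt (Ps / 2)) * (of_real (- b) + \<i> * of_real a)"
    unfolding z by (simp add: algebra_simps)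
  moreover have "- b \<in> {1, -1}"
    using ab by auto
  ultimately show ?thesis
    unfolding qpsk_def using ab by blast
qed

lemma cmod_qpsk:
  assumes "Ps \<ge> 0" and "z \<in> qpsk Ps"
  shows "(cmod z)\<^sup>2 = Ps"
proof -
  obtain a b where z: "z = complex_of_real (sqrt (Ps / 2)) * (of_real a + \<i> * of_real b)"
    and ab: "a \<in> {1, -1}" "b \<in> {1, -1}"
    using assms(2) unfolding qpsk_def by blast
  have "(cmod z)\<^sup>2 = Ps / 2 * (a\<^sup>2 + b\<^sup>2)"
    using assms(1) by (simp add: z norm_mult cmod_power2 power_mult_distrib)
  also have "\<dots> = Ps"
    using ab by auto
  finally show ?thesis .
qed

lemma finite_qpsk: "finite (qpsk Ps)"
proof -
  have "qpsk Ps \<subseteq> (\<lambda>(a, b). complex_of_real (sqrt (Ps / 2)) * (of_real a + \<i> * of_real b))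
      ` ({1, -1} \<times> {1, -1})"
    unfolding qpsk_def by (auto intro!: image_eqI)
  then show ?thesis
    by (rule finite_subset) simp
qed

lemma symbol_assignments_qpsk:
  assumes "x \<in> symbol_assignments N M Ps" and "fst u < N" and "snd u < M"
  shows "x u \<in> qpsk Ps"
  using assms by (cases u) (simp add: symbol_assignments_def)

lemma rotation_closed_symbol_assignments: "rotation_closed (symbol_assignments N M Ps)"
  by (auto simp: rotation_closed_def rotate_at_def symbol_assignments_def mult_i_qpsk)

lemma finite_symbol_assignments: "finite (symbol_assignments N M Ps)"
proof (rule finite_subset[OF _ finite_set_of_finite_funs])
  show "symbol_assignments N M Ps \<subseteq> {f. \<forall>u. (u \<in> {..<N} \<times> {..<M} \<longrightarrow> f u \<in> qpsk Ps)
      \<and> (u \<notin> {..<N} \<times> {..<M} \<longrightarrow> f u = 0)}"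
    unfolding symbol_assignments_def by auto
qed (simp_all add: finite_qpsk)

lemma symbol_assignments_nonempty: "symbol_assignments N M Ps \<noteq> {}"
proof -
  define z where "z = complex_of_real (sqrt (Ps / 2)) * (of_real 1 + \<i> * of_real 1)"
  have "z \<in> qpsk Ps"
    unfolding qpsk_def z_def by blast
  then have "(\<lambda>(k, l). if k < N \<and> l < M then z else 0) \<in> symbol_assignments N M Ps"
    unfolding symbol_assignments_def by auto
  then show ?thesis
    by blast
qed

definition symbol_index :: "nat \<Rightarrow> nat \<Rightarrow> nat \<Rightarrow> nat \<Rightarrow> nat \<times> nat" where
  "symbol_index N M r q =
     (nat ((int (r mod N) - int (q mod N)) mod int N), nat ((int (r div N) - int (q div N)) mod int M))"

definition Xt_phase :: "nat \<Rightarrow> nat \<Rightarrow> nat \<Rightarrow> nat \<Rightarrow> complex" where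
  "Xt_phase N M r q =
    (let k1 = r mod N; l1 = r div N; k2 = q mod N; l2 = q div N;
         b = nat ((int l1 - int l2) mod int M);
         ph = cis (2 * pi * real_of_int (centered N k2) * real b / (real M * real N))
     in if l1 < l2 then cis (- 2 * pi * real k1 / real N) * ph else ph)"

lemma Xt_eq_symbol_mult_phase: "Xt N M x r q = x (symbol_index N M r q) * Xt_phase N M r q"
  unfolding Xt_def Xt_phase_def symbol_index_def Let_def by simp

lemma cmod_Xt_phase: "cmod (Xt_phase N M r q) = 1"
  unfolding Xt_phase_def Let_def by (simp add: norm_mult)

lemma symbol_index_bounds:
  assumes "N > 0" and "M > 0"
  shows "fst (symbol_index N M r q) < N" and "snd (symbol_index N M r q) < M"
  using assms unfolding symbol_index_def by (simp_all add: nat_less_iff)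

lemma nat_mod_diff_right_cancel:
  assumes "a < n" "b < n" and "nat ((int a - c) mod int n) = nat ((int b - c) mod int n)"
  shows "a = b"
proof -
  have "(int a - c) mod int n = (int b - c) mod int n"
    using assms by (simp add: eq_nat_nat_iff)
  then have "(int a - c + c) mod int n = (int b - c + c) mod int n"
    by (rule mod_add_cong) simp
  then show ?thesis
    using assms(1,2) by simp
qed

lemma nat_mod_diff_left_cancel:
  assumes "a < n" "b < n" and "nat ((c - int a) mod int n) = nat ((c - int b) mod int n)"
  shows "a = b"
proof -
  have "(c - int a) mod int n = (c - int b) mod int n"
    using assms by (simp add: eq_nat_nat_iff)
  then have "(c - (c - int a)) mod int n = (c - (c - int b)) mod int n"
    by (rule mod_diff_cong[OF refl])
  then show ?thesis
    using assms(1,2) by simp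
qed

lemma nat_eq_if_mod_div_eq:
  fixes m m' N :: nat
  assumes "m mod N = m' mod N" and "m div N = m' div N"
  shows "m = m'"
  by (metis assms div_mult_mod_eq)

lemma inj_on_symbol_index_row: "inj_on (\<lambda>r. symbol_index N M r q) {..<M * N}"
proof (rule inj_onI)
  fix r r' assume "r \<in> {..<M * N}" "r' \<in> {..<M * N}"
    and eq: "symbol_index N M r q = symbol_index N M r' q"
  then have div_less: "r div N < M" "r' div N < M" and "N > 0"
    by (simp_all add: less_mult_imp_div_less) (cases "N = 0"; simp)
  from eq have "nat ((int (r mod N) - int (q mod N)) mod int N)
      = nat ((int (r' mod N) - int (q mod N)) mod int N)"
    and "nat ((int (r div N) - int (q div N)) mod int M)
      = nat ((int (r' div N) - int (q div N)) mod int M)"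
    by (simp_all add: symbol_index_def)
  then show "r = r'"
    using nat_mod_diff_right_cancel mod_less_divisor[OF \<open>N > 0\<close>] div_less nat_eq_if_mod_div_eq
    by metis
qed

lemma symbol_index_column_neq:
  assumes "p < M * N" and "q < M * N" and "p \<noteq> q"
  shows "symbol_index N M r p \<noteq> symbol_index N M r q"
proof
  assume eq: "symbol_index N M r p = symbol_index N M r q"
  from assms(1,2) have div_less: "p div N < M" "q div N < M" and "N > 0"
    by (simp_all add: less_mult_imp_div_less) (cases "N = 0"; simp)
  from eq have "nat ((int (r mod N) - int (p mod N)) mod int N)
      = nat ((int (r mod N) - int (q mod N)) mod int N)"
    and "nat ((int (r div N) - int (p div N)) mod int M)
      = nat ((int (r div N) - int (q div N)) mod int M)"
    by (simp_all add: symbol_index_def)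
  then have "p = q"
    using nat_mod_diff_left_cancel mod_less_divisor[OF \<open>N > 0\<close>] div_less nat_eq_if_mod_div_eq
    by metis
  with assms(3) show False ..
qed

lemma Gmat_eq_sum_symbol_products:
  "Gmat N M x p q = (\<Sum>r<M * N. (cnj (Xt_phase N M r p) * Xt_phase N M r q)
      * (cnj (x (symbol_index N M r p)) * x (symbol_index N M r q)))"
  unfolding Gmat_def Xt_eq_symbol_mult_phase by (simp add: algebra_simps)

lemma cmod_symbol_index_squared:
  assumes "N > 0" and "M > 0" and "Ps \<ge> 0" and "x \<in> symbol_assignments N M Ps"
  shows "(cmod (x (symbol_index N M r q)))\<^sup>2 = Ps"
  using assms symbol_index_bounds[OF assms(1,2)] by (simp add: cmod_qpsk symbol_assignments_qpsk)

theorem lemma1: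
  fixes M N :: nat and Ps :: real and p q :: nat
  assumes "M > 0" and "N > 0" and "Ps > 0"
    and "p < M * N" and "q < M * N" and "p \<noteq> q"
  shows "measure_pmf.expectation (qpsk_symbols N M Ps) (\<lambda>x. Gmat N M x p q) = 0
       \<and> cvariance (qpsk_symbols N M Ps) (\<lambda>x. Gmat N M x p q) = real M * real N * Ps\<^sup>2"
proof -
  define S where "S = symbol_assignments N M Ps"
  have S: "S \<noteq> {}" "finite S" "rotation_closed S"
    unfolding S_def by (rule symbol_assignments_nonempty finite_symbol_assignments
        rotation_closed_symbol_assignments)+
  note distinct_symbols = symbol_index_column_neq[OF assms(4-6)]
  have sum_G: "(\<Sum>x\<in>S. Gmat N M x p q) = 0"
    unfolding Gmat_eq_sum_symbol_products by (rule sum_sesquilinear_eq_0[OF S(3) distinct_symbols])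
  have "(\<Sum>x\<in>S. (cmod (Gmat N M x p q))\<^sup>2) = real (card S) * real (card {..<M * N}) * Ps\<^sup>2"
    unfolding Gmat_eq_sum_symbol_products
    by (rule sum_cmod_sesquilinear_squared[OF S(3) finite_lessThan distinct_symbols])
       (use assms in \<open>auto simp: S_def norm_mult cmod_Xt_phase cmod_symbol_index_squared
          inj_on_symbol_index_row\<close>)
  then have sum_cmod_G: "(\<Sum>x\<in>S. (cmod (Gmat N M x p q))\<^sup>2) / card S = real M * real N * Ps\<^sup>2"
    using S(1,2) by simp
  have "measure_pmf.expectation (qpsk_symbols N M Ps) (\<lambda>x. Gmat N M x p q) = 0"
    unfolding qpsk_symbols_def S_def[symmetric] integral_pmf_of_set_vector[OF S(1,2)] sum_G by simp
  moreover have "cvariance (qpsk_symbols N M Ps) (\<lambda>x. Gmat N M x p q) = real M * real N * Ps\<^sup>2"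
    unfolding cvariance_def calculation diff_zero
    unfolding qpsk_symbols_def S_def[symmetric] integral_pmf_of_set[OF S(1,2)]
    by (rule sum_cmod_G)
  ultimately show ?thesis ..
qed

end
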